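(* Let $A\in\mathbb{R}^{n\times n}$ be symmetric of rank $r\ge 1$, written as $A=Q\Lambda Q^\top=\sum_{i=1}^r\lambda_i\vec{q}_i\vec{q}_i^\top$, where $Q=[\vec{q}_1\ \cdots\ \vec{q}_r]\in\mathbb{R}^{n\times r}$ has orthonormal columns that are eigenvectors of $A$ for its nonzero eigenvalues and $\Lambda=\mathrm{Diag}(\lambda_1,\dots,\lambda_r)$ is the diagonal matrix of these nonzero eigenvalues. Let $\bar{Q}=[\bar{\vec{q}}_{r+1}\ \cdots\ \bar{\vec{q}}_n]$ have orthonormal columns spanning the null space of $A$, and let $\vec{x}_0=Q\nu+\bar{Q}\mu$ with $\nu\in\mathbb{R}^r$, $\nu\neq 0$, $\mu\in\mathbb{R}^{n-r}$. Let $\vec{x}_{t+1}=A\vec{x}_t$, $X_j=[\vec{x}_0\ \cdots\ \vec{x}_j]$, $Y_j=[\vec{x}_1\ \cdots\ \vec{x}_{j+1}]$, $\hat{A}_j=Y_jX_j^{\dagger}$. Let $1\le k<n$, let $U_{k-1}$ be the matrix of left singular vectors of $X_{k-1}$ corresponding to its nonzero singular values, and $S_k=I-U_{k-1}U_{k-1}^\top$. Assume $\|S_kQ\Lambda^k\nu\|\neq 0$. Then $$A-\hat{A}_k=A\left(I-\frac{S_kQ\Lambda^k\nu\nu^\top\Lambda^kQ^\top}{\|S_kQ\Lambda^k\nu\|^2}\right)S_k .$$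
   Context: $M^{\dagger}$ is the Moore–Penrose pseudo-inverse; $\|\cdot\|$ on vectors is the Euclidean norm. $S_k$ is the orthogonal projection onto the orthogonal complement of the range of $X_{k-1}$. *)

theory Defs
  imports Complex_Main "Jordan_Normal_Form.Matrix" "Jordan_Normal_Form.DL_Rank"
begin

definition vnorm :: "real vec \<Rightarrow> real" where
  "vnorm v = sqrt (v \<bullet> v)"

definition pinv :: "real mat \<Rightarrow> real mat" where
  "pinv M = (THE X. X \<in> carrier_mat (dim_col M) (dim_row M) \<and>
      M * X * M = M \<and> X * M * X = X \<and>
      transpose_mat (M * X) = M * X \<and> transpose_mat (X * M) = X * M)"

definition col_range :: "real mat \<Rightarrow> real vec set" where
  "col_range M = {M *\<^sub>v w | w. w \<in> carrier_vec (dim_col M)}"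

definition orth_compl :: "nat \<Rightarrow> real vec set \<Rightarrow> real vec set" where
  "orth_compl n V = {v \<in> carrier_vec n. \<forall>u\<in>V. v \<bullet> u = 0}"

definition orth_proj :: "nat \<Rightarrow> real vec set \<Rightarrow> real mat" where
  "orth_proj n V = (THE P. P \<in> carrier_mat n n \<and>
      (\<forall>v\<in>carrier_vec n. P *\<^sub>v v \<in> V \<and> (\<forall>u\<in>V. (v - P *\<^sub>v v) \<bullet> u = 0)))"

primrec iter :: "real mat \<Rightarrow> real vec \<Rightarrow> nat \<Rightarrow> real vec" where
  "iter A x0 0 = x0"
| "iter A x0 (Suc t) = A *\<^sub>v iter A x0 t"

definition Xmat :: "nat \<Rightarrow> real mat \<Rightarrow> real vec \<Rightarrow> nat \<Rightarrow> real mat" where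
  "Xmat n A x0 j = mat_of_cols n (map (iter A x0) [0..<Suc j])"

definition Ymat :: "nat \<Rightarrow> real mat \<Rightarrow> real vec \<Rightarrow> nat \<Rightarrow> real mat" where
  "Ymat n A x0 j = mat_of_cols n (map (iter A x0) [1..<Suc (Suc j)])"

definition Ahat :: "nat \<Rightarrow> real mat \<Rightarrow> real vec \<Rightarrow> nat \<Rightarrow> real mat" where
  "Ahat n A x0 j = Ymat n A x0 j * pinv (Xmat n A x0 j)"

definition Smat :: "nat \<Rightarrow> real mat \<Rightarrow> real vec \<Rightarrow> nat \<Rightarrow> real mat" where
  "Smat n A x0 k = orth_proj n (orth_compl n (col_range (Xmat n A x0 (k - 1))))"

end

theory Submission
  imports Defs
begin

text \<open>
  Since \<open>Y\<^sub>k = A X\<^sub>k\<close>, the operator \<open>Ahat\<^sub>k = A X\<^sub>k X\<^sub>k\<^sup>+\<close> equals \<open>A P\<^sub>k\<close>, where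
  \<open>P\<^sub>k\<close> is the orthogonal projector onto \<open>span {x\<^sub>0, ..., x\<^sub>k}\<close>; likewise
  \<open>S\<^sub>k = I - P\<^sub>k\<^sub>-\<^sub>1\<close>. One Gram--Schmidt step gives
  \<open>P\<^sub>k = P\<^sub>k\<^sub>-\<^sub>1 + s s\<^sup>T / |s|\<^sup>2\<close> with \<open>s = S\<^sub>k x\<^sub>k\<close>, hence
  \<open>A - Ahat\<^sub>k = A (S\<^sub>k - s s\<^sup>T / |s|\<^sup>2) = A (I - S\<^sub>k x\<^sub>k x\<^sub>k\<^sup>T / |s|\<^sup>2) S\<^sub>k\<close>
  by the symmetry of \<open>S\<^sub>k\<close>. The spectral hypotheses only serve to identify
  \<open>x\<^sub>k = Q \<Lambda>\<^sup>k \<nu>\<close> for \<open>k \<ge> 1\<close>: the null-space component of \<open>x\<^sub>0\<close> dies in the first step.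
  As \<^const>\<open>pinv\<close> is a definite description, a Moore--Penrose inverse must also be shown to exist.
\<close>

lemma mat_eq_if_mult_vec_eq:
  fixes A B :: "'a::semiring_1 mat"
  assumes A: "A \<in> carrier_mat n m" and B: "B \<in> carrier_mat n m"
    and eq: "\<And>v. v \<in> carrier_vec m \<Longrightarrow> A *\<^sub>v v = B *\<^sub>v v"
  shows "A = B"
proof (rule eq_matI)
  fix i j assume i: "i < dim_row B" and j: "j < dim_col B"
  have "(A *\<^sub>v unit_vec m j) $ i = (B *\<^sub>v unit_vec m j) $ i" using eq by simp
  then show "A $$ (i, j) = B $$ (i, j)" using A B i j by simp
qed (use A B in auto)

lemma assoc_mult_mat_dims:
  fixes A :: "'a::semiring_0 mat"
  shows "dim_col A = dim_row B \<Longrightarrow> dim_col B = dim_row C \<Longrightarrow> A * B * C = A * (B * C)"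
  by (rule assoc_mult_mat[of A "dim_row A" "dim_col A" B "dim_col B" C "dim_col C"]) auto

lemma eq_if_minus_eq_0_vec:
  fixes a b :: "'a::ab_group_add vec"
  assumes a: "a \<in> carrier_vec n" and b: "b \<in> carrier_vec n" and diff: "a - b = 0\<^sub>v n"
  shows "a = b"
proof (rule eq_vecI)
  fix i assume i: "i < dim_vec b"
  have "(a - b) $ i = 0" using diff i b by simp
  then show "a $ i = b $ i" using i a b by simp
qed (use a b in simp)

lemma scalar_prod_self_eq_0_iff:
  fixes v :: "real vec"
  assumes "v \<in> carrier_vec n"
  shows "v \<bullet> v = 0 \<longleftrightarrow> v = 0\<^sub>v n"
  using conjugate_square_eq_0_vec[OF assms] by simp

lemma scalar_prod_self_nonneg:
  fixes v :: "real vec"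
  shows "v \<bullet> v \<ge> 0"
  using conjugate_square_ge_0_vec[of v] by simp

lemma power2_vnorm: "(vnorm v)\<^sup>2 = v \<bullet> v"
  unfolding vnorm_def using scalar_prod_self_nonneg by simp

lemma symmetric_mat_scalar_prod:
  fixes P :: "'a::comm_semiring_0 mat"
  assumes P: "P \<in> carrier_mat n n" and sym: "transpose_mat P = P"
    and x: "x \<in> carrier_vec n" and y: "y \<in> carrier_vec n"
  shows "(P *\<^sub>v x) \<bullet> y = x \<bullet> (P *\<^sub>v y)"
  using transpose_vec_mult_scalar[OF P y x] sym by simp

lemma smult_mat_mult_vec:
  fixes A :: "'a::comm_semiring_0 mat"
  assumes "A \<in> carrier_mat n m" and "v \<in> carrier_vec m"
  shows "(a \<cdot>\<^sub>m A) *\<^sub>v v = a \<cdot>\<^sub>v (A *\<^sub>v v)"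
  using assms by (intro eq_vecI) (auto simp: scalar_prod_def sum_distrib_left ac_simps)

lemma one_minus_mat_mult_vec:
  fixes P :: "'a::ring_1 mat"
  shows "P \<in> carrier_mat n n \<Longrightarrow> v \<in> carrier_vec n \<Longrightarrow> (1\<^sub>m n - P) *\<^sub>v v = v - P *\<^sub>v v"
  using minus_mult_distrib_mat_vec[of "1\<^sub>m n" n n P v] by simp

lemma outer_prod_mult_vec:
  fixes a b x :: "'a::comm_semiring_1 vec"
  assumes a: "a \<in> carrier_vec n" and b: "b \<in> carrier_vec m" and x: "x \<in> carrier_vec m"
  shows "(mat_of_cols n [a] * mat_of_rows m [b]) *\<^sub>v x = (b \<bullet> x) \<cdot>\<^sub>v a"
proof -
  have "(mat_of_cols n [a] * mat_of_rows m [b]) *\<^sub>v x = mat_of_cols n [a] *\<^sub>v (mat_of_rows m [b] *\<^sub>v x)"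
    by (rule assoc_mult_mat_vec) (use x in auto)
  also have "mat_of_rows m [b] *\<^sub>v x = vec 1 (\<lambda>_. b \<bullet> x)"
    using b x by (intro eq_vecI) (auto simp: mat_of_rows_def scalar_prod_def)
  also have "mat_of_cols n [a] *\<^sub>v vec 1 (\<lambda>_. b \<bullet> x) = (b \<bullet> x) \<cdot>\<^sub>v a"
    using a by (intro eq_vecI) (auto simp: mat_of_cols_def scalar_prod_def mult.commute)
  finally show ?thesis .
qed

lemma outer_prod_carrier [simp]: "mat_of_cols n [a] * mat_of_rows m [b] \<in> carrier_mat n m"
  by (rule mult_carrier_mat[of _ n "Suc 0"]) auto

lemma rank_one_update_mult_vec:
  fixes P :: "'a::comm_ring_1 mat"
  assumes P: "P \<in> carrier_mat n n" and w: "w \<in> carrier_vec n" and x: "x \<in> carrier_vec n"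
  shows "(P + a \<cdot>\<^sub>m (mat_of_cols n [w] * mat_of_rows n [w])) *\<^sub>v x = P *\<^sub>v x + (a * (w \<bullet> x)) \<cdot>\<^sub>v w"
  using add_mult_distrib_mat_vec[OF P _ x, of "a \<cdot>\<^sub>m (mat_of_cols n [w] * mat_of_rows n [w])"]
    smult_mat_mult_vec[OF outer_prod_carrier x] outer_prod_mult_vec[OF w w x]
  by (simp add: smult_smult_assoc)

lemma transpose_smult_mat: "transpose_mat (a \<cdot>\<^sub>m A) = a \<cdot>\<^sub>m transpose_mat A"
  by (rule eq_matI) auto

lemma transpose_rank_one_update:
  fixes P :: "'a::comm_semiring_0 mat"
  assumes P: "P \<in> carrier_mat n n" and sym: "transpose_mat P = P"
  shows "transpose_mat (P + a \<cdot>\<^sub>m (mat_of_cols n [w] * mat_of_rows n [w]))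
    = P + a \<cdot>\<^sub>m (mat_of_cols n [w] * mat_of_rows n [w])"
proof -
  have "transpose_mat (mat_of_cols n [w] * mat_of_rows n [w])
      = transpose_mat (mat_of_rows n [w]) * transpose_mat (mat_of_cols n [w])"
    by (rule transpose_mult) auto
  moreover have "transpose_mat (P + a \<cdot>\<^sub>m (mat_of_cols n [w] * mat_of_rows n [w]))
      = transpose_mat P + transpose_mat (a \<cdot>\<^sub>m (mat_of_cols n [w] * mat_of_rows n [w]))"
    using P by (intro transpose_add) auto
  ultimately show ?thesis using sym by (simp add: transpose_smult_mat transpose_mat_of_cols transpose_mat_of_rows)
qed

lemma mat_of_cols_map_mult_vec:
  fixes A :: "'a::comm_semiring_0 mat"
  assumes A: "A \<in> carrier_mat n m" and vs: "set vs \<subseteq> carrier_vec m"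
  shows "mat_of_cols n (map ((*\<^sub>v) A) vs) = A * mat_of_cols m vs"
proof (rule eq_matI)
  fix i j assume i: "i < dim_row (A * mat_of_cols m vs)" and j: "j < dim_col (A * mat_of_cols m vs)"
  have "vs ! j \<in> carrier_vec m" using vs j by auto
  then have "vec m (\<lambda>k. vs ! j $ k) = vs ! j" by (intro eq_vecI) auto
  then show "mat_of_cols n (map ((*\<^sub>v) A) vs) $$ (i, j) = (A * mat_of_cols m vs) $$ (i, j)"
    using i j A by (simp add: mat_of_cols_def)
qed (use A in auto)

lemma mat_of_cols_Cons_mult_vCons:
  fixes v y :: "'a::comm_semiring_0 vec"
  assumes v: "v \<in> carrier_vec n" and y: "y \<in> carrier_vec (length vs)"
  shows "mat_of_cols n (v # vs) *\<^sub>v vCons a y = a \<cdot>\<^sub>v v + mat_of_cols n vs *\<^sub>v y"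
proof (rule eq_vecI)
  fix i assume "i < dim_vec (a \<cdot>\<^sub>v v + mat_of_cols n vs *\<^sub>v y)"
  then have i: "i < n" by simp
  have "(mat_of_cols n (v # vs) *\<^sub>v vCons a y) $ i
      = (\<Sum>j = 0..<Suc (length vs). (v # vs) ! j $ i * vCons a y $ j)"
    using i y by (simp add: mat_of_cols_def scalar_prod_def
        del: sum.atLeast0_lessThan_Suc atLeast0_lessThan_Suc)
  also have "\<dots> = v $ i * a + (\<Sum>j = 0..<length vs. vs ! j $ i * y $ j)"
    by (subst sum.atLeast0_lessThan_Suc_shift) simp
  finally show "(mat_of_cols n (v # vs) *\<^sub>v vCons a y) $ i = (a \<cdot>\<^sub>v v + mat_of_cols n vs *\<^sub>v y) $ i"
    using i v y by (simp add: mat_of_cols_def scalar_prod_def ac_simps)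
qed (use v in simp)

lemma col_range_Cons:
  assumes v: "v \<in> carrier_vec n" and u: "u \<in> col_range (mat_of_cols n vs)"
  shows "a \<cdot>\<^sub>v v + u \<in> col_range (mat_of_cols n (v # vs))"
proof -
  obtain y where y: "y \<in> carrier_vec (length vs)" and u_eq: "u = mat_of_cols n vs *\<^sub>v y"
    using u unfolding col_range_def by auto
  have "a \<cdot>\<^sub>v v + u = mat_of_cols n (v # vs) *\<^sub>v vCons a y"
    unfolding u_eq mat_of_cols_Cons_mult_vCons[OF v y] ..
  then show ?thesis unfolding col_range_def using y by auto
qed

lemma col_range_diff_smult:
  fixes M :: "real mat"
  assumes M: "M \<in> carrier_mat n m" and u: "u \<in> col_range M" and v: "v \<in> col_range M"
  shows "u - a \<cdot>\<^sub>v v \<in> col_range M"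
proof -
  obtain y z where y: "y \<in> carrier_vec m" and z: "z \<in> carrier_vec m"
    and u_eq: "u = M *\<^sub>v y" and v_eq: "v = M *\<^sub>v z"
    using u v M unfolding col_range_def by auto
  have "u - a \<cdot>\<^sub>v v = M *\<^sub>v (y - a \<cdot>\<^sub>v z)"
    unfolding u_eq v_eq using mult_minus_distrib_mat_vec[OF M y, of "a \<cdot>\<^sub>v z"] mult_mat_vec[OF M z] z
    by simp
  then show ?thesis unfolding col_range_def using M y z by auto
qed

lemma col_range_Cons_residual:
  fixes v :: "real vec"
  assumes v: "v \<in> carrier_vec n"
    and u: "u \<in> col_range (mat_of_cols n vs)" and p: "p \<in> col_range (mat_of_cols n vs)"
  shows "u + a \<cdot>\<^sub>v (v - p) \<in> col_range (mat_of_cols n (v # vs))"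
proof -
  have "u \<in> carrier_vec n" "p \<in> carrier_vec n"
    using u p unfolding col_range_def by (auto intro: mult_mat_vec_carrier[OF mat_of_cols_carrier(1)])
  then have "u + a \<cdot>\<^sub>v (v - p) = a \<cdot>\<^sub>v v + (u - a \<cdot>\<^sub>v p)"
    using v by (intro eq_vecI) (auto simp: algebra_simps)
  then show ?thesis
    using col_range_Cons[OF v col_range_diff_smult[OF mat_of_cols_carrier(1) u p]] by simp
qed

lemma col_range_factor:
  fixes M B :: "real mat"
  assumes M: "M \<in> carrier_mat n m" and B: "B \<in> carrier_mat n k"
    and range: "\<And>x. x \<in> carrier_vec k \<Longrightarrow> B *\<^sub>v x \<in> col_range M"
  shows "\<exists>Z \<in> carrier_mat m k. M * Z = B"
proof -
  have "\<exists>y. y \<in> carrier_vec m \<and> B *\<^sub>v unit_vec k j = M *\<^sub>v y" for j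
    using range[of "unit_vec k j"] M unfolding col_range_def by auto
  then obtain f where f: "\<And>j. f j \<in> carrier_vec m \<and> B *\<^sub>v unit_vec k j = M *\<^sub>v f j"
    by metis
  define Z where "Z = mat_of_cols m (map f [0..<k])"
  have Z: "Z \<in> carrier_mat m k" unfolding Z_def using mat_of_cols_carrier(1)[of m "map f [0..<k]"] by simp
  have "M * Z = B"
  proof (rule eq_matI)
    fix i j assume i: "i < dim_row B" and j: "j < dim_col B"
    have jk: "j < k" using j B by simp
    have "col (M * Z) j = M *\<^sub>v col Z j" by (rule col_mult2[OF M Z jk])
    also have "\<dots> = M *\<^sub>v f j" unfolding Z_def using f[of j] jk by simp
    also have "\<dots> = B *\<^sub>v unit_vec k j" using f[of j] by simp
    also have "\<dots> = col B j" using B j by (intro eq_vecI) auto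
    finally have "col (M * Z) j $ i = col B j $ i" by simp
    then show "(M * Z) $$ (i, j) = B $$ (i, j)" using i j M Z B by simp
  qed (use M Z B in auto)
  then show ?thesis using Z by blast
qed

section \<open>Orthogonal projectors\<close>

definition is_orth_proj :: "nat \<Rightarrow> real vec set \<Rightarrow> real mat \<Rightarrow> bool" where
  "is_orth_proj n V P \<longleftrightarrow> P \<in> carrier_mat n n \<and> transpose_mat P = P \<and>
     (\<forall>v\<in>V. P *\<^sub>v v = v) \<and> (\<forall>u\<in>carrier_vec n. (\<forall>v\<in>V. v \<bullet> u = 0) \<longrightarrow> P *\<^sub>v u = 0\<^sub>v n)"

lemma is_orth_proj_carrier: "is_orth_proj n V P \<Longrightarrow> P \<in> carrier_mat n n"
  and is_orth_proj_symmetric: "is_orth_proj n V P \<Longrightarrow> transpose_mat P = P"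
  and is_orth_proj_fixes: "is_orth_proj n V P \<Longrightarrow> v \<in> V \<Longrightarrow> P *\<^sub>v v = v"
  and is_orth_proj_kills:
    "is_orth_proj n V P \<Longrightarrow> u \<in> carrier_vec n \<Longrightarrow> (\<And>v. v \<in> V \<Longrightarrow> v \<bullet> u = 0) \<Longrightarrow> P *\<^sub>v u = 0\<^sub>v n"
  unfolding is_orth_proj_def by blast+

lemma is_orth_proj_scalar_prod:
  "is_orth_proj n V P \<Longrightarrow> x \<in> carrier_vec n \<Longrightarrow> y \<in> carrier_vec n \<Longrightarrow> (P *\<^sub>v x) \<bullet> y = x \<bullet> (P *\<^sub>v y)"
  by (rule symmetric_mat_scalar_prod[OF is_orth_proj_carrier is_orth_proj_symmetric])

lemma is_orth_proj_absorb:
  assumes P: "is_orth_proj n V P" and R: "is_orth_proj n V R" and V: "V \<subseteq> carrier_vec n"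
    and x: "x \<in> carrier_vec n"
  shows "P *\<^sub>v (R *\<^sub>v x) = P *\<^sub>v x"
proof -
  note Pc = is_orth_proj_carrier[OF P] and Rc = is_orth_proj_carrier[OF R]
  have Rx: "R *\<^sub>v x \<in> carrier_vec n" using Rc x by simp
  have "v \<bullet> (x - R *\<^sub>v x) = 0" if v: "v \<in> V" for v
  proof -
    have vc: "v \<in> carrier_vec n" using V v by auto
    have "v \<bullet> (R *\<^sub>v x) = v \<bullet> x"
      using is_orth_proj_scalar_prod[OF R vc x] is_orth_proj_fixes[OF R v] by simp
    then show ?thesis using scalar_prod_minus_distrib[OF vc x Rx] by simp
  qed
  then have "P *\<^sub>v (x - R *\<^sub>v x) = 0\<^sub>v n" using x Rx by (intro is_orth_proj_kills[OF P]) auto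
  then have "P *\<^sub>v x - P *\<^sub>v (R *\<^sub>v x) = 0\<^sub>v n" using mult_minus_distrib_mat_vec[OF Pc x Rx] by simp
  then show ?thesis using eq_if_minus_eq_0_vec Pc x Rx by (metis mult_mat_vec_carrier)
qed

lemma is_orth_proj_idem:
  "is_orth_proj n V P \<Longrightarrow> V \<subseteq> carrier_vec n \<Longrightarrow> x \<in> carrier_vec n \<Longrightarrow> P *\<^sub>v (P *\<^sub>v x) = P *\<^sub>v x"
  by (rule is_orth_proj_absorb)

lemma is_orth_proj_mult_self:
  assumes P: "is_orth_proj n V P" and V: "V \<subseteq> carrier_vec n"
  shows "P * P = P"
  using is_orth_proj_carrier[OF P] is_orth_proj_idem[OF P V]
  by (intro mat_eq_if_mult_vec_eq[of _ n n]) auto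

lemma is_orth_proj_unique:
  assumes P: "is_orth_proj n V P" and R: "is_orth_proj n V R" and V: "V \<subseteq> carrier_vec n"
  shows "P = R"
proof (rule mat_eq_if_mult_vec_eq[OF is_orth_proj_carrier[OF P] is_orth_proj_carrier[OF R]])
  fix x :: "real vec" assume x: "x \<in> carrier_vec n"
  note Pc = is_orth_proj_carrier[OF P] and Rc = is_orth_proj_carrier[OF R]
  have Px: "P *\<^sub>v x \<in> carrier_vec n" and Rx: "R *\<^sub>v x \<in> carrier_vec n" using Pc Rc x by auto
  have same: "(P *\<^sub>v x) \<bullet> y = (R *\<^sub>v x) \<bullet> y" if y: "y \<in> carrier_vec n" for y
  proof -
    have Py: "P *\<^sub>v y \<in> carrier_vec n" using Pc y by simp
    have "(P *\<^sub>v x) \<bullet> y = (P *\<^sub>v (R *\<^sub>v x)) \<bullet> y" using is_orth_proj_absorb[OF P R V x] by simp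
    also have "\<dots> = (R *\<^sub>v x) \<bullet> (P *\<^sub>v y)" using is_orth_proj_scalar_prod[OF P Rx y] .
    also have "\<dots> = x \<bullet> (R *\<^sub>v (P *\<^sub>v y))" using is_orth_proj_scalar_prod[OF R x Py] .
    also have "\<dots> = (R *\<^sub>v x) \<bullet> y"
      using is_orth_proj_absorb[OF R P V y] is_orth_proj_scalar_prod[OF R x y] by simp
    finally show ?thesis .
  qed
  have d: "P *\<^sub>v x - R *\<^sub>v x \<in> carrier_vec n" using Px Rx by simp
  have "(P *\<^sub>v x - R *\<^sub>v x) \<bullet> (P *\<^sub>v x - R *\<^sub>v x) = 0"
    using same[OF d] minus_scalar_prod_distrib[OF Px Rx d] by simp
  then show "P *\<^sub>v x = R *\<^sub>v x"
    using scalar_prod_self_eq_0_iff[OF d] eq_if_minus_eq_0_vec[OF Px Rx] by simp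
qed

lemma is_orth_proj_insert:
  assumes P: "is_orth_proj n V P" and V: "V \<subseteq> carrier_vec n" and v: "v \<in> carrier_vec n"
    and w: "w = v - P *\<^sub>v v" and w0: "w \<noteq> 0\<^sub>v n"
  shows "is_orth_proj n (insert v V) (P + (1 / (w \<bullet> w)) \<cdot>\<^sub>m (mat_of_cols n [w] * mat_of_rows n [w]))"
    (is "is_orth_proj n _ ?P'")
proof -
  note Pc = is_orth_proj_carrier[OF P]
  define c where "c = w \<bullet> w"
  have Pv: "P *\<^sub>v v \<in> carrier_vec n" using Pc v by simp
  have wc: "w \<in> carrier_vec n" using w v Pv by simp
  have c0: "c \<noteq> 0" using w0 scalar_prod_self_eq_0_iff[OF wc] by (simp add: c_def)
  have w_prod: "w \<bullet> x = v \<bullet> x - v \<bullet> (P *\<^sub>v x)" if x: "x \<in> carrier_vec n" for x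
    using minus_scalar_prod_distrib[OF v Pv x] is_orth_proj_scalar_prod[OF P v x] w by simp
  have P'x: "?P' *\<^sub>v x = P *\<^sub>v x + ((w \<bullet> x) / c) \<cdot>\<^sub>v w" if x: "x \<in> carrier_vec n" for x
    using rank_one_update_mult_vec[OF Pc wc x] by (simp add: c_def)
  have "transpose_mat ?P' = ?P'" by (rule transpose_rank_one_update[OF Pc is_orth_proj_symmetric[OF P]])
  moreover have "?P' *\<^sub>v u = u" if u: "u \<in> insert v V" for u
  proof (cases "u = v")
    case True
    have "P *\<^sub>v w = 0\<^sub>v n"
      using w mult_minus_distrib_mat_vec[OF Pc v Pv] is_orth_proj_idem[OF P V v] Pv by simp
    then have "w \<bullet> (P *\<^sub>v v) = 0" using is_orth_proj_scalar_prod[OF P wc v] v by simp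
    then have "w \<bullet> v = c"
      using w scalar_prod_minus_distrib[OF wc v Pv] by (simp add: c_def)
    then have "?P' *\<^sub>v v = P *\<^sub>v v + w" using P'x[OF v] c0 by simp
    also have "\<dots> = v" using w v Pv Pc by (intro eq_vecI) auto
    finally show ?thesis using True by simp
  next
    case False
    then have uV: "u \<in> V" using u by simp
    then have uc: "u \<in> carrier_vec n" using V by auto
    have "w \<bullet> u = 0" using w_prod[OF uc] is_orth_proj_fixes[OF P uV] by simp
    then show ?thesis using P'x[OF uc] is_orth_proj_fixes[OF P uV] uc wc by (auto intro!: eq_vecI)
  qed
  moreover have "?P' *\<^sub>v u = 0\<^sub>v n" if uc: "u \<in> carrier_vec n" and orth: "\<forall>v'\<in>insert v V. v' \<bullet> u = 0" for u
  proof -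
    have Pu: "P *\<^sub>v u = 0\<^sub>v n" using is_orth_proj_kills[OF P uc] orth by auto
    then have "w \<bullet> u = 0" using w_prod[OF uc] orth v by simp
    then show ?thesis using P'x[OF uc] Pu wc by (auto intro!: eq_vecI)
  qed
  ultimately show ?thesis unfolding is_orth_proj_def using Pc by auto
qed

lemma is_orth_proj_exists:
  assumes "set vs \<subseteq> carrier_vec n"
  shows "\<exists>P. is_orth_proj n (set vs) P \<and> (\<forall>x\<in>carrier_vec n. P *\<^sub>v x \<in> col_range (mat_of_cols n vs))"
  using assms
proof (induction vs)
  case Nil
  have "is_orth_proj n {} (0\<^sub>m n n)" unfolding is_orth_proj_def by auto
  moreover have "0\<^sub>m n n *\<^sub>v x = mat_of_cols n [] *\<^sub>v vNil" if "x \<in> carrier_vec n" for x :: "real vec"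
    using that by (intro eq_vecI) auto
  ultimately show ?case unfolding col_range_def by force
next
  case (Cons v vs)
  then have v: "v \<in> carrier_vec n" and vs: "set vs \<subseteq> carrier_vec n" by auto
  obtain P where P: "is_orth_proj n (set vs) P"
    and range: "\<And>x. x \<in> carrier_vec n \<Longrightarrow> P *\<^sub>v x \<in> col_range (mat_of_cols n vs)"
    using Cons.IH[OF vs] by blast
  note Pc = is_orth_proj_carrier[OF P]
  have Pv: "P *\<^sub>v v \<in> carrier_vec n" using Pc v by simp
  define w where "w = v - P *\<^sub>v v"
  have wc: "w \<in> carrier_vec n" unfolding w_def using v Pv by simp
  have range': "P *\<^sub>v x + a \<cdot>\<^sub>v w \<in> col_range (mat_of_cols n (v # vs))" if "x \<in> carrier_vec n" for x a
    unfolding w_def by (rule col_range_Cons_residual[OF v range[OF that] range[OF v]])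
  show ?case
  proof (cases "w = 0\<^sub>v n")
    case True
    then have "P *\<^sub>v v = v" using eq_if_minus_eq_0_vec[OF v Pv] unfolding w_def by simp
    then have "is_orth_proj n (set (v # vs)) P" using P unfolding is_orth_proj_def by auto
    moreover have "P *\<^sub>v x \<in> col_range (mat_of_cols n (v # vs))" if "x \<in> carrier_vec n" for x
    proof -
      have "P *\<^sub>v x + 0 \<cdot>\<^sub>v w = P *\<^sub>v x" using Pc that wc by (intro eq_vecI) auto
      then show ?thesis using range'[OF that, of 0] by simp
    qed
    ultimately show ?thesis by blast
  next
    case False
    define P' where "P' = P + (1 / (w \<bullet> w)) \<cdot>\<^sub>m (mat_of_cols n [w] * mat_of_rows n [w])"
    have "is_orth_proj n (set (v # vs)) P'"
      using is_orth_proj_insert[OF P vs v w_def False] unfolding P'_def by simp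
    moreover have "P' *\<^sub>v x \<in> col_range (mat_of_cols n (v # vs))" if "x \<in> carrier_vec n" for x
      using range'[OF that] rank_one_update_mult_vec[OF Pc wc that] unfolding P'_def by simp
    ultimately show ?thesis by blast
  qed
qed

lemma col_mem_col_range:
  fixes N :: "real mat"
  assumes N: "N \<in> carrier_mat n m" and j: "j < m"
  shows "col N j \<in> col_range N"
proof -
  have "col N j = N *\<^sub>v unit_vec m j" using N j by (intro eq_vecI) auto
  then show ?thesis unfolding col_range_def using N by auto
qed

lemma orth_cols_iff:
  fixes M :: "real mat"
  assumes M: "M \<in> carrier_mat n m" and u: "u \<in> carrier_vec n"
  shows "(\<forall>v\<in>set (cols M). v \<bullet> u = 0) \<longleftrightarrow> transpose_mat M *\<^sub>v u = 0\<^sub>v m"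
proof -
  have entry: "(transpose_mat M *\<^sub>v u) $ j = col M j \<bullet> u" if "j < m" for j
    using that M by simp
  show ?thesis
  proof
    assume "\<forall>v\<in>set (cols M). v \<bullet> u = 0"
    then show "transpose_mat M *\<^sub>v u = 0\<^sub>v m" using entry M by (intro eq_vecI) (auto simp: cols_def)
  next
    assume "transpose_mat M *\<^sub>v u = 0\<^sub>v m"
    then show "\<forall>v\<in>set (cols M). v \<bullet> u = 0" using entry M by (auto simp: cols_def)
  qed
qed

lemma orth_rows_iff:
  fixes M :: "real mat"
  assumes M: "M \<in> carrier_mat n m" and u: "u \<in> carrier_vec m"
  shows "(\<forall>v\<in>set (rows M). v \<bullet> u = 0) \<longleftrightarrow> M *\<^sub>v u = 0\<^sub>v n"
  using orth_cols_iff[of "transpose_mat M" m n u] M u by simp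

lemma is_orth_proj_cols_mult:
  assumes P: "is_orth_proj n (set (cols M)) P" and M: "M \<in> carrier_mat n m"
  shows "P * M = M"
proof (rule eq_matI)
  note Pc = is_orth_proj_carrier[OF P]
  fix i j assume i: "i < dim_row M" and j: "j < dim_col M"
  have "col (P * M) j = P *\<^sub>v col M j" by (rule col_mult2[OF Pc M]) (use M j in simp)
  also have "\<dots> = col M j" using is_orth_proj_fixes[OF P] M j by (simp add: cols_def)
  finally have "col (P * M) j $ i = col M j $ i" by simp
  then show "(P * M) $$ (i, j) = M $$ (i, j)" using Pc M i j by simp
qed (use is_orth_proj_carrier[OF P] M in auto)

lemma is_orth_proj_rows_mult:
  assumes R: "is_orth_proj m (set (rows M)) R" and M: "M \<in> carrier_mat n m"
  shows "M * R = M"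
proof -
  note Rc = is_orth_proj_carrier[OF R]
  have "R * transpose_mat M = transpose_mat M"
    using is_orth_proj_cols_mult[of m "transpose_mat M" R n] R M by simp
  then have "transpose_mat (R * transpose_mat M) = M" by simp
  then show ?thesis
    using transpose_mult[OF Rc, of "transpose_mat M" n] M is_orth_proj_symmetric[OF R] by simp
qed

lemma orth_proj_eqI:
  assumes S: "S \<in> carrier_mat n n"
    and V_diff: "\<And>u v. u \<in> V \<Longrightarrow> v \<in> V \<Longrightarrow> u - v \<in> V"
    and range: "\<And>v. v \<in> carrier_vec n \<Longrightarrow> S *\<^sub>v v \<in> V"
    and orth: "\<And>v u. v \<in> carrier_vec n \<Longrightarrow> u \<in> V \<Longrightarrow> (v - S *\<^sub>v v) \<bullet> u = 0"
  shows "orth_proj n V = S"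
  unfolding orth_proj_def
proof (rule the_equality)
  show "S \<in> carrier_mat n n \<and> (\<forall>v\<in>carrier_vec n. S *\<^sub>v v \<in> V \<and> (\<forall>u\<in>V. (v - S *\<^sub>v v) \<bullet> u = 0))"
    using S range orth by auto
next
  fix T assume T: "T \<in> carrier_mat n n \<and> (\<forall>v\<in>carrier_vec n. T *\<^sub>v v \<in> V \<and> (\<forall>u\<in>V. (v - T *\<^sub>v v) \<bullet> u = 0))"
  show "T = S"
  proof (rule mat_eq_if_mult_vec_eq[of _ n n])
    fix v :: "real vec" assume v: "v \<in> carrier_vec n"
    have Tc: "T \<in> carrier_mat n n" using T by simp
    have Tv: "T *\<^sub>v v \<in> carrier_vec n" and Sv: "S *\<^sub>v v \<in> carrier_vec n" using Tc S v by auto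
    define d where "d = T *\<^sub>v v - S *\<^sub>v v"
    have dc: "d \<in> carrier_vec n" unfolding d_def using Tv Sv by simp
    have dV: "d \<in> V" unfolding d_def using T v range[OF v] by (intro V_diff) auto
    have "d = (v - S *\<^sub>v v) - (v - T *\<^sub>v v)" unfolding d_def using v Tc S by (intro eq_vecI) auto
    then have "d \<bullet> d = (v - S *\<^sub>v v) \<bullet> d - (v - T *\<^sub>v v) \<bullet> d"
      using minus_scalar_prod_distrib[of "v - S *\<^sub>v v" n "v - T *\<^sub>v v" d] v Tv Sv dc by simp
    also have "\<dots> = 0" using T orth[OF v dV] v dV by simp
    finally show "T *\<^sub>v v = S *\<^sub>v v"
      using scalar_prod_self_eq_0_iff[OF dc] eq_if_minus_eq_0_vec[OF Tv Sv] unfolding d_def by simp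
  qed (use T S in auto)
qed

lemma orth_proj_orth_compl_col_range:
  assumes N: "N \<in> carrier_mat n m" and P: "is_orth_proj n (set (cols N)) P"
  shows "orth_proj n (orth_compl n (col_range N)) = 1\<^sub>m n - P"
proof (rule orth_proj_eqI)
  note Pc = is_orth_proj_carrier[OF P]
  note S = one_minus_mat_mult_vec[OF Pc]
  have range_carrier: "col_range N \<subseteq> carrier_vec n" unfolding col_range_def using N by auto
  show "1\<^sub>m n - P \<in> carrier_mat n n" using Pc by (rule minus_carrier_mat)
  show "u - v \<in> orth_compl n (col_range N)"
    if "u \<in> orth_compl n (col_range N)" and "v \<in> orth_compl n (col_range N)" for u v
    using that range_carrier minus_scalar_prod_distrib[of u n v] unfolding orth_compl_def by auto
  show "(1\<^sub>m n - P) *\<^sub>v v \<in> orth_compl n (col_range N)" if v: "v \<in> carrier_vec n" for v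
  proof -
    have Pv: "P *\<^sub>v v \<in> carrier_vec n" using Pc v by simp
    have "(v - P *\<^sub>v v) \<bullet> (N *\<^sub>v y) = 0" if y: "y \<in> carrier_vec m" for y
    proof -
      have Ny: "N *\<^sub>v y \<in> carrier_vec n" using N y by simp
      have "P *\<^sub>v (N *\<^sub>v y) = N *\<^sub>v y" using is_orth_proj_cols_mult[OF P N] Pc N y by (metis assoc_mult_mat_vec)
      then show ?thesis
        using minus_scalar_prod_distrib[OF v Pv Ny] is_orth_proj_scalar_prod[OF P v Ny] by simp
    qed
    then show ?thesis using S[OF v] v Pv N unfolding orth_compl_def col_range_def by auto
  qed
  show "(v - (1\<^sub>m n - P) *\<^sub>v v) \<bullet> u = 0"
    if v: "v \<in> carrier_vec n" and u: "u \<in> orth_compl n (col_range N)" for v u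
  proof -
    have uc: "u \<in> carrier_vec n" using u unfolding orth_compl_def by simp
    have "col N j \<bullet> u = 0" if "j < m" for j
      using u col_mem_col_range[OF N that] comm_scalar_prod[OF uc, of "col N j"] N that
      unfolding orth_compl_def by auto
    then have "P *\<^sub>v u = 0\<^sub>v n" using N by (intro is_orth_proj_kills[OF P uc]) (auto simp: cols_def)
    moreover have "v - (1\<^sub>m n - P) *\<^sub>v v = P *\<^sub>v v" using S[OF v] v Pc by (intro eq_vecI) auto
    ultimately show ?thesis using is_orth_proj_scalar_prod[OF P v uc] v by simp
  qed
qed

lemma is_orth_proj_rows_absorb:
  assumes R: "is_orth_proj m (set (rows M)) R" and M: "M \<in> carrier_mat n m"
    and T: "T \<in> carrier_mat m m" and MT: "M * T = M"
  shows "R * T = R"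
proof (rule mat_eq_if_mult_vec_eq[OF _ is_orth_proj_carrier[OF R]])
  note Rc = is_orth_proj_carrier[OF R]
  fix x :: "real vec" assume x: "x \<in> carrier_vec m"
  have Tx: "T *\<^sub>v x \<in> carrier_vec m" using T x by simp
  have MTx: "M *\<^sub>v (T *\<^sub>v x) \<in> carrier_vec n" using M Tx by simp
  have "M *\<^sub>v (x - T *\<^sub>v x) = 0\<^sub>v n"
    using mult_minus_distrib_mat_vec[OF M x Tx] assoc_mult_mat_vec[OF M T x] MT MTx by simp
  then have "\<forall>v\<in>set (rows M). v \<bullet> (x - T *\<^sub>v x) = 0" using orth_rows_iff[OF M] x Tx by simp
  then have "R *\<^sub>v (x - T *\<^sub>v x) = 0\<^sub>v m" using is_orth_proj_kills[OF R, of "x - T *\<^sub>v x"] x Tx by simp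
  then have "R *\<^sub>v x = R *\<^sub>v (T *\<^sub>v x)"
    using mult_minus_distrib_mat_vec[OF Rc x Tx] eq_if_minus_eq_0_vec[of "R *\<^sub>v x" m] Rc Tx x by simp
  then show "R * T *\<^sub>v x = R *\<^sub>v x" using assoc_mult_mat_vec[OF Rc T x] by simp
qed (rule mult_carrier_mat[OF is_orth_proj_carrier[OF R] T])

section \<open>The Moore--Penrose inverse\<close>

definition is_pseudo_inverse :: "real mat \<Rightarrow> real mat \<Rightarrow> bool" where
  "is_pseudo_inverse M X \<longleftrightarrow> X \<in> carrier_mat (dim_col M) (dim_row M) \<and>
      M * X * M = M \<and> X * M * X = X \<and>
      transpose_mat (M * X) = M * X \<and> transpose_mat (X * M) = X * M"

lemma pseudo_inverse_transpose:
  assumes M: "M \<in> carrier_mat n m" and X: "is_pseudo_inverse M X"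
  shows "is_pseudo_inverse (transpose_mat M) (transpose_mat X)"
proof -
  have Xc: "X \<in> carrier_mat m n" using X M unfolding is_pseudo_inverse_def by simp
  have MXM: "M * X * M = M" and XMX: "X * M * X = X"
    and MX: "transpose_mat (M * X) = M * X" and XM: "transpose_mat (X * M) = X * M"
    using X unfolding is_pseudo_inverse_def by auto
  have MX': "transpose_mat X * transpose_mat M = M * X" using MX transpose_mult[OF M Xc] by simp
  have XM': "transpose_mat M * transpose_mat X = X * M" using XM transpose_mult[OF Xc M] by simp
  have "transpose_mat M * transpose_mat X * transpose_mat M = transpose_mat M"
  proof -
    have "transpose_mat M = transpose_mat (M * X * M)" unfolding MXM ..
    also have "\<dots> = transpose_mat M * transpose_mat (M * X)" by (rule transpose_mult) (use M Xc in auto)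
    also have "\<dots> = transpose_mat M * (transpose_mat X * transpose_mat M)" unfolding MX MX' ..
    also have "\<dots> = transpose_mat M * transpose_mat X * transpose_mat M" using M Xc by simp
    finally show ?thesis ..
  qed
  moreover have "transpose_mat X * transpose_mat M * transpose_mat X = transpose_mat X"
  proof -
    have "transpose_mat X = transpose_mat (X * M * X)" unfolding XMX ..
    also have "\<dots> = transpose_mat X * transpose_mat (X * M)" by (rule transpose_mult) (use M Xc in auto)
    also have "\<dots> = transpose_mat X * (transpose_mat M * transpose_mat X)" unfolding XM XM' ..
    also have "\<dots> = transpose_mat X * transpose_mat M * transpose_mat X" using M Xc by simp
    finally show ?thesis ..
  qed
  ultimately show ?thesis using M Xc MX' XM' MX XM unfolding is_pseudo_inverse_def by simp
qed

lemma pseudo_inverse_col_proj: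
  assumes M: "M \<in> carrier_mat n m" and X: "is_pseudo_inverse M X"
  shows "is_orth_proj n (set (cols M)) (M * X)"
proof -
  have Xc: "X \<in> carrier_mat m n" using X M unfolding is_pseudo_inverse_def by simp
  have MXM: "M * X * M = M" and sym: "transpose_mat (M * X) = M * X"
    using X unfolding is_pseudo_inverse_def by auto
  have "M * X *\<^sub>v v = v" if "v \<in> set (cols M)" for v
  proof -
    obtain j where j: "j < m" and v: "v = col M j" using \<open>v \<in> set (cols M)\<close> M by (auto simp: cols_def)
    have "col (M * X * M) j = M * X *\<^sub>v col M j" using M Xc j by (intro col_mult2) auto
    then show ?thesis using MXM v by simp
  qed
  moreover have "M * X *\<^sub>v u = 0\<^sub>v n" if u: "u \<in> carrier_vec n" and "\<forall>v\<in>set (cols M). v \<bullet> u = 0" for u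
  proof -
    have Mu: "transpose_mat M *\<^sub>v u = 0\<^sub>v m" using orth_cols_iff[OF M u] that by simp
    have "M * X *\<^sub>v u = transpose_mat (M * X) *\<^sub>v u" using sym by simp
    also have "\<dots> = transpose_mat X *\<^sub>v (transpose_mat M *\<^sub>v u)"
      using transpose_mult[OF M Xc] M Xc u by simp
    also have "\<dots> = 0\<^sub>v n" unfolding Mu using Xc by (intro eq_vecI) auto
    finally show ?thesis .
  qed
  ultimately show ?thesis unfolding is_orth_proj_def using M Xc sym by auto
qed

lemma pseudo_inverse_row_proj:
  assumes M: "M \<in> carrier_mat n m" and X: "is_pseudo_inverse M X"
  shows "is_orth_proj m (set (rows M)) (X * M)"
proof -
  have Xc: "X \<in> carrier_mat m n" using X M unfolding is_pseudo_inverse_def by simp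
  have "transpose_mat M * transpose_mat X = X * M"
    using transpose_mult[OF Xc M] X unfolding is_pseudo_inverse_def by simp
  then show ?thesis
    using pseudo_inverse_col_proj[OF _ pseudo_inverse_transpose[OF M X]] M by simp
qed

lemma pseudo_inverse_unique:
  assumes M: "M \<in> carrier_mat n m" and X: "is_pseudo_inverse M X" and Y: "is_pseudo_inverse M Y"
  shows "X = Y"
proof -
  have Xc: "X \<in> carrier_mat m n" and Yc: "Y \<in> carrier_mat m n"
    using X Y M unfolding is_pseudo_inverse_def by auto
  have MX: "M * X = M * Y"
    using is_orth_proj_unique[OF pseudo_inverse_col_proj[OF M X] pseudo_inverse_col_proj[OF M Y]]
      cols_dim[of M] M by simp
  have XM: "X * M = Y * M"
    using is_orth_proj_unique[OF pseudo_inverse_row_proj[OF M X] pseudo_inverse_row_proj[OF M Y]]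
      rows_carrier[of M] M by simp
  have "X = X * M * X" using X unfolding is_pseudo_inverse_def by simp
  also have "\<dots> = Y * (M * Y)" using XM MX Xc Yc M by (metis assoc_mult_mat)
  also have "\<dots> = Y" using Y Yc M unfolding is_pseudo_inverse_def by simp
  finally show ?thesis .
qed

text \<open>The pseudo-inverse is built as \<open>R Z P\<close> from the projectors \<open>P\<close>, \<open>R\<close> onto the column
  and row space of \<open>M\<close> and any \<open>Z\<close> with \<open>M Z = P\<close>.\<close>

lemma pseudo_inverse_exists:
  assumes M: "M \<in> carrier_mat n m"
  shows "\<exists>X. is_pseudo_inverse M X"
proof -
  obtain P where P: "is_orth_proj n (set (cols M)) P"
    and range: "\<forall>x\<in>carrier_vec n. P *\<^sub>v x \<in> col_range M"
    using is_orth_proj_exists[of "cols M" n] mat_of_cols_cols[of M] cols_dim[of M] M by auto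
  obtain R where R: "is_orth_proj m (set (rows M)) R"
    using is_orth_proj_exists[of "rows M" m] rows_carrier[of M] M by auto
  note Pc = is_orth_proj_carrier[OF P] and Rc = is_orth_proj_carrier[OF R]
  obtain Z where Zc: "Z \<in> carrier_mat m n" and MZ: "M * Z = P"
    using col_range_factor[OF M Pc] range by blast
  have PM: "P * M = M" by (rule is_orth_proj_cols_mult[OF P M])
  have MR: "M * R = M" by (rule is_orth_proj_rows_mult[OF R M])
  have PP: "P * P = P" using is_orth_proj_mult_self[OF P] cols_dim[of M] M by simp
  have RR: "R * R = R" using is_orth_proj_mult_self[OF R] rows_carrier[of M] M by simp
  have "M * (Z * M) = M" using MZ PM M Zc by (simp add: assoc_mult_mat_dims[symmetric])
  then have RZM: "R * (Z * M) = R" using is_orth_proj_rows_absorb[OF R M] Zc M by simp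
  define X where "X = R * Z * P"
  have Xc: "X \<in> carrier_mat m n" unfolding X_def using Rc Zc Pc by simp
  have MX: "M * X = P"
  proof -
    have "M * X = M * R * Z * P" unfolding X_def using M Rc Zc Pc by (simp add: assoc_mult_mat_dims)
    also have "\<dots> = P" unfolding MR MZ PP ..
    finally show ?thesis .
  qed
  have XM: "X * M = R"
  proof -
    have "X * M = R * (Z * (P * M))" unfolding X_def using M Rc Zc Pc by (simp add: assoc_mult_mat_dims)
    also have "\<dots> = R" unfolding PM RZM ..
    finally show ?thesis .
  qed
  have "M * X * M = M" unfolding MX PM ..
  moreover have "X * M * X = X"
  proof -
    have "X * M * X = R * X" unfolding XM ..
    also have "\<dots> = R * R * Z * P" unfolding X_def using Rc Zc Pc by (simp add: assoc_mult_mat_dims)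
    also have "\<dots> = X" unfolding RR X_def ..
    finally show ?thesis .
  qed
  ultimately have "is_pseudo_inverse M X"
    unfolding is_pseudo_inverse_def MX XM
    using Xc M is_orth_proj_symmetric[OF P] is_orth_proj_symmetric[OF R] by simp
  then show ?thesis ..
qed

lemma pinv_is_pseudo_inverse:
  assumes M: "M \<in> carrier_mat n m"
  shows "is_pseudo_inverse M (pinv M)"
proof -
  obtain X where X: "is_pseudo_inverse M X" using pseudo_inverse_exists[OF M] ..
  have "pinv M = (THE X. is_pseudo_inverse M X)" unfolding pinv_def is_pseudo_inverse_def ..
  also have "\<dots> = X" using X pseudo_inverse_unique[OF M _ X] by (rule the_equality)
  finally show ?thesis using X by simp
qed

lemma mult_pinv_is_orth_proj:
  "M \<in> carrier_mat n m \<Longrightarrow> is_orth_proj n (set (cols M)) (M * pinv M)"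
  by (rule pseudo_inverse_col_proj[OF _ pinv_is_pseudo_inverse])

section \<open>Power iterates and the residual \<open>A - Ahat\<close>\<close>

lemma pow_mat_Suc_left:
  fixes D :: "'a::semiring_1 mat"
  assumes D: "D \<in> carrier_mat r r"
  shows "D ^\<^sub>m Suc k = D * D ^\<^sub>m k"
proof (induction k)
  case 0
  show ?case using D by simp
next
  case (Suc k)
  have "D ^\<^sub>m Suc (Suc k) = D * D ^\<^sub>m k * D" using Suc by simp
  also have "\<dots> = D * D ^\<^sub>m Suc k" using D by (simp add: assoc_mult_mat_dims)
  finally show ?case .
qed

lemma transpose_pow_mat:
  fixes D :: "'a::comm_semiring_1 mat"
  assumes D: "D \<in> carrier_mat r r"
  shows "transpose_mat (D ^\<^sub>m k) = transpose_mat D ^\<^sub>m k"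
proof (induction k)
  case 0
  show ?case using D by simp
next
  case (Suc k)
  have "transpose_mat (D ^\<^sub>m Suc k) = transpose_mat D * transpose_mat D ^\<^sub>m k"
    using transpose_mult[of "D ^\<^sub>m k" r r D r] D Suc by simp
  then show ?case using pow_mat_Suc_left[of "transpose_mat D" r k] D by simp
qed

lemma transpose_mat_diag: "transpose_mat (mat_diag n f) = mat_diag n f"
  by (rule eq_matI) (auto simp: mat_diag_def)

lemma orthonormal_decomp_mult_right:
  fixes Q D :: "'a::comm_semiring_1 mat"
  assumes Q: "Q \<in> carrier_mat n r" and D: "D \<in> carrier_mat r r" and QQ: "transpose_mat Q * Q = 1\<^sub>m r"
  shows "Q * D * transpose_mat Q * Q = Q * D"
proof -
  have "Q * D * transpose_mat Q * Q = Q * D * (transpose_mat Q * Q)"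
    using Q carrier_matD[OF D] by (simp add: assoc_mult_mat_dims)
  then show ?thesis using QQ right_mult_one_mat[OF mult_carrier_mat[OF Q D]] by simp
qed

lemma iter_carrier: "A \<in> carrier_mat n n \<Longrightarrow> x0 \<in> carrier_vec n \<Longrightarrow> iter A x0 t \<in> carrier_vec n"
  by (induction t) auto

lemma iter_Suc_eq_mult_pow_mat:
  assumes A: "A \<in> carrier_mat n n" and Q: "Q \<in> carrier_mat n r" and D: "D \<in> carrier_mat r r"
    and AQ: "A * Q = Q * D" and \<nu>: "\<nu> \<in> carrier_vec r" and z: "z \<in> carrier_vec n" and Az: "A *\<^sub>v z = 0\<^sub>v n"
  shows "iter A (Q *\<^sub>v \<nu> + z) (Suc t) = Q *\<^sub>v (D ^\<^sub>m Suc t *\<^sub>v \<nu>)"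
proof -
  have AQ_vec: "A *\<^sub>v (Q *\<^sub>v y) = Q *\<^sub>v (D *\<^sub>v y)" if "y \<in> carrier_vec r" for y
    using assoc_mult_mat_vec[OF A Q that] assoc_mult_mat_vec[OF Q D that] AQ by simp
  show ?thesis
  proof (induction t)
    case 0
    have "iter A (Q *\<^sub>v \<nu> + z) (Suc 0) = A *\<^sub>v (Q *\<^sub>v \<nu>) + A *\<^sub>v z"
      using mult_add_distrib_mat_vec[OF A _ z, of "Q *\<^sub>v \<nu>"] Q \<nu> by simp
    then show ?case using AQ_vec[OF \<nu>] Az Q D \<nu> by simp
  next
    case (Suc t)
    have Dt: "D ^\<^sub>m Suc t *\<^sub>v \<nu> \<in> carrier_vec r"
      by (rule mult_mat_vec_carrier[OF pow_carrier_mat[OF D] \<nu>])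
    have "iter A (Q *\<^sub>v \<nu> + z) (Suc (Suc t)) = A *\<^sub>v (Q *\<^sub>v (D ^\<^sub>m Suc t *\<^sub>v \<nu>))"
      unfolding iter.simps(2)[of A _ "Suc t"] Suc.IH ..
    also have "\<dots> = Q *\<^sub>v ((D * D ^\<^sub>m Suc t) *\<^sub>v \<nu>)"
      using AQ_vec[OF Dt] assoc_mult_mat_vec[OF D pow_carrier_mat[OF D] \<nu>] by (simp del: pow_mat.simps)
    finally show ?case unfolding pow_mat_Suc_left[OF D, of "Suc t"] .
  qed
qed

lemma iter_orthonormal_decomp:
  assumes A: "A = Q * D * transpose_mat Q" and Q: "Q \<in> carrier_mat n r" and D: "D \<in> carrier_mat r r"
    and QQ: "transpose_mat Q * Q = 1\<^sub>m r" and \<nu>: "\<nu> \<in> carrier_vec r" and z: "z \<in> carrier_vec n"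
    and Az: "A *\<^sub>v z = 0\<^sub>v n" and k: "1 \<le> k"
  shows "iter A (Q *\<^sub>v \<nu> + z) k = Q *\<^sub>v (D ^\<^sub>m k *\<^sub>v \<nu>)"
proof -
  obtain t where t: "k = Suc t" using k by (cases k) auto
  have "A \<in> carrier_mat n n" unfolding A using Q D by simp
  moreover have "A * Q = Q * D" unfolding A by (rule orthonormal_decomp_mult_right[OF Q D QQ])
  ultimately show ?thesis unfolding t using iter_Suc_eq_mult_pow_mat[OF _ Q D _ \<nu> z Az] by blast
qed

lemma Ymat_eq_mult_Xmat:
  assumes A: "A \<in> carrier_mat n n" and x0: "x0 \<in> carrier_vec n"
  shows "Ymat n A x0 j = A * Xmat n A x0 j"
proof -
  have shift: "map (iter A x0) [1..<Suc (Suc j)] = map ((*\<^sub>v) A) (map (iter A x0) [0..<Suc j])"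
    by (induction j) auto
  have "set (map (iter A x0) [0..<Suc j]) \<subseteq> carrier_vec n" using iter_carrier[OF A x0] by auto
  then show ?thesis unfolding Ymat_def Xmat_def shift by (rule mat_of_cols_map_mult_vec[OF A])
qed

lemma Ahat_eq_mult_proj:
  assumes A: "A \<in> carrier_mat n n" and x0: "x0 \<in> carrier_vec n"
    and P: "is_orth_proj n (set (map (iter A x0) [0..<Suc j])) P"
  shows "Ahat n A x0 j = A * P"
proof -
  let ?X = "Xmat n A x0 j"
  have X: "?X \<in> carrier_mat n (Suc j)"
    unfolding Xmat_def using mat_of_cols_carrier(1)[of n "map (iter A x0) [0..<Suc j]"] by simp
  have "cols ?X = map (iter A x0) [0..<Suc j]"
    unfolding Xmat_def by (rule cols_mat_of_cols) (use iter_carrier[OF A x0] in auto)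
  moreover have "set (cols ?X) \<subseteq> carrier_vec n" using cols_dim[of ?X] X by simp
  ultimately have XX: "?X * pinv ?X = P"
    using is_orth_proj_unique[OF mult_pinv_is_orth_proj[OF X]] P by simp
  have "pinv ?X \<in> carrier_mat (Suc j) n"
    using pinv_is_pseudo_inverse[OF X] X unfolding is_pseudo_inverse_def by simp
  then show ?thesis
    unfolding Ahat_def Ymat_eq_mult_Xmat[OF A x0] XX[symmetric] using A X by simp
qed

lemma Smat_eq_one_minus_proj:
  assumes A: "A \<in> carrier_mat n n" and x0: "x0 \<in> carrier_vec n" and k: "1 \<le> k"
    and P: "is_orth_proj n (set (map (iter A x0) [0..<k])) P"
  shows "Smat n A x0 k = 1\<^sub>m n - P"
proof -
  have X: "Xmat n A x0 (k - 1) = mat_of_cols n (map (iter A x0) [0..<k])"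
    unfolding Xmat_def using k by simp
  have "cols (Xmat n A x0 (k - 1)) = map (iter A x0) [0..<k]"
    unfolding X by (rule cols_mat_of_cols) (use iter_carrier[OF A x0] in auto)
  moreover have "Xmat n A x0 (k - 1) \<in> carrier_mat n k"
    unfolding X using mat_of_cols_carrier(1)[of n "map (iter A x0) [0..<k]"] by simp
  ultimately show ?thesis
    unfolding Smat_def using orth_proj_orth_compl_col_range[of "Xmat n A x0 (k - 1)" n k P] P by simp
qed

lemma outer_prod_mult_mat_vec:
  fixes M :: "'a::comm_semiring_1 mat"
  assumes M: "M \<in> carrier_mat n m" and v: "v \<in> carrier_vec m"
  shows "mat_of_cols n [M *\<^sub>v v] * mat_of_rows n [M *\<^sub>v v]
    = M * mat_of_cols m [v] * mat_of_rows m [v] * transpose_mat M"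
proof -
  have col: "mat_of_cols n [M *\<^sub>v v] = M * mat_of_cols m [v]"
    using mat_of_cols_map_mult_vec[OF M, of "[v]"] v by simp
  have "mat_of_rows n [M *\<^sub>v v] = transpose_mat (M * mat_of_cols m [v])"
    unfolding col[symmetric] by (simp add: transpose_mat_of_cols)
  also have "\<dots> = mat_of_rows m [v] * transpose_mat M"
    using transpose_mult[OF M mat_of_cols_carrier(1)] by (simp add: transpose_mat_of_cols)
  finally show ?thesis unfolding col using M by (simp add: assoc_mult_mat_dims)
qed

lemma outer_prod_mult_symmetric_factor:
  fixes S Q D :: "'a::comm_semiring_1 mat"
  assumes S: "S \<in> carrier_mat n n" and Q: "Q \<in> carrier_mat n r" and D: "D \<in> carrier_mat r r"
    and D_sym: "transpose_mat D = D" and v: "v \<in> carrier_vec r"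
  shows "S * Q * D * mat_of_cols r [v] * mat_of_rows r [v] * D * transpose_mat Q
    = S * mat_of_cols n [Q *\<^sub>v (D *\<^sub>v v)] * mat_of_rows n [Q *\<^sub>v (D *\<^sub>v v)]"
proof -
  have QD: "Q * D \<in> carrier_mat n r" by (rule mult_carrier_mat[OF Q D])
  have "transpose_mat (Q * D) = D * transpose_mat Q" using transpose_mult[OF Q D] D_sym by simp
  moreover have "Q * D *\<^sub>v v = Q *\<^sub>v (D *\<^sub>v v)" using assoc_mult_mat_vec[OF Q D v] .
  ultimately have "mat_of_cols n [Q *\<^sub>v (D *\<^sub>v v)] * mat_of_rows n [Q *\<^sub>v (D *\<^sub>v v)]
      = Q * D * mat_of_cols r [v] * mat_of_rows r [v] * (D * transpose_mat Q)"
    using outer_prod_mult_mat_vec[OF QD v] by simp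
  then show ?thesis using S Q carrier_matD[OF D] by (simp add: assoc_mult_mat_dims)
qed

lemma one_minus_smult_outer_mult_vec:
  fixes S :: "real mat"
  assumes S: "S \<in> carrier_mat n n" and w: "w \<in> carrier_vec n" and y: "y \<in> carrier_vec n"
  shows "(1\<^sub>m n - a \<cdot>\<^sub>m (S * mat_of_cols n [w] * mat_of_rows n [w])) *\<^sub>v y = y - (a * (w \<bullet> y)) \<cdot>\<^sub>v (S *\<^sub>v w)"
proof -
  have B: "S * mat_of_cols n [w] * mat_of_rows n [w] \<in> carrier_mat n n"
    using mult_carrier_mat[OF mult_carrier_mat[OF S mat_of_cols_carrier(1)] mat_of_rows_carrier(1)] .
  have "(S * mat_of_cols n [w] * mat_of_rows n [w]) *\<^sub>v y = (w \<bullet> y) \<cdot>\<^sub>v (S *\<^sub>v w)"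
    using outer_prod_mult_vec[OF w w y] assoc_mult_mat_vec[OF S outer_prod_carrier y] mult_mat_vec[OF S w] S
    by (simp add: assoc_mult_mat_dims)
  then show ?thesis
    using minus_mult_distrib_mat_vec[OF one_carrier_mat smult_carrier_mat[OF B] y] smult_mat_mult_vec[OF B y] y
    by (simp add: smult_smult_assoc)
qed

lemma rank_one_update_residual:
  assumes P: "is_orth_proj n V P" and A: "A \<in> carrier_mat n n" and w: "w \<in> carrier_vec n"
  defines "s \<equiv> w - P *\<^sub>v w"
  shows "A - A * (P + (1 / (s \<bullet> s)) \<cdot>\<^sub>m (mat_of_cols n [s] * mat_of_rows n [s]))
    = A * (1\<^sub>m n - (1 / (s \<bullet> s)) \<cdot>\<^sub>m ((1\<^sub>m n - P) * mat_of_cols n [w] * mat_of_rows n [w])) * (1\<^sub>m n - P)"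
proof -
  note Pc = is_orth_proj_carrier[OF P]
  define S where "S = 1\<^sub>m n - P"
  define c where "c = s \<bullet> s"
  define E where "E = 1\<^sub>m n - (1 / c) \<cdot>\<^sub>m (S * mat_of_cols n [w] * mat_of_rows n [w])"
  have Sc: "S \<in> carrier_mat n n" unfolding S_def using Pc by (rule minus_carrier_mat)
  have S_vec: "S *\<^sub>v y = y - P *\<^sub>v y" if "y \<in> carrier_vec n" for y
    unfolding S_def using one_minus_mat_mult_vec[OF Pc that] .
  have sc: "s \<in> carrier_vec n" unfolding s_def using Pc w by simp
  have "transpose_mat S = S"
    unfolding S_def using transpose_minus[of "1\<^sub>m n" n n P] Pc is_orth_proj_symmetric[OF P] by simp
  then have w_S: "w \<bullet> (S *\<^sub>v x) = s \<bullet> x" if "x \<in> carrier_vec n" for x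
    using symmetric_mat_scalar_prod[OF Sc _ w that] S_vec[OF w] s_def by simp
  have Ec: "E \<in> carrier_mat n n"
    unfolding E_def by (intro minus_carrier_mat smult_carrier_mat mult_carrier_mat[OF _ mat_of_rows_carrier(1)]
        mult_carrier_mat[OF Sc mat_of_cols_carrier(1)])
  have E_vec: "E *\<^sub>v y = y - ((1 / c) * (w \<bullet> y)) \<cdot>\<^sub>v s" if "y \<in> carrier_vec n" for y
    unfolding E_def using one_minus_smult_outer_mult_vec[OF Sc w that] S_vec[OF w] s_def by simp
  let ?P' = "P + (1 / c) \<cdot>\<^sub>m (mat_of_cols n [s] * mat_of_rows n [s])"
  have P'c: "?P' \<in> carrier_mat n n" using Pc by simp
  have AP': "A * ?P' \<in> carrier_mat n n" using mult_carrier_mat[OF A P'c] .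
  have "A - A * ?P' = A * E * S"
  proof (rule mat_eq_if_mult_vec_eq[of _ n n])
    fix x :: "real vec" assume x: "x \<in> carrier_vec n"
    have P'x: "?P' *\<^sub>v x = P *\<^sub>v x + ((1 / c) * (s \<bullet> x)) \<cdot>\<^sub>v s"
      by (rule rank_one_update_mult_vec[OF Pc sc x])
    have "(A - A * ?P') *\<^sub>v x = A *\<^sub>v (x - ?P' *\<^sub>v x)"
      using minus_mult_distrib_mat_vec[OF A AP' x] assoc_mult_mat_vec[OF A P'c x]
        mult_minus_distrib_mat_vec[OF A x, of "?P' *\<^sub>v x"] P'c x
      by simp
    also have "x - ?P' *\<^sub>v x = E *\<^sub>v (S *\<^sub>v x)"
      unfolding P'x E_vec[OF mult_mat_vec_carrier[OF Sc x]] w_S[OF x] unfolding S_vec[OF x]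
      using x Pc sc by (intro eq_vecI) auto
    also have "A *\<^sub>v (E *\<^sub>v (S *\<^sub>v x)) = (A * E * S) *\<^sub>v x"
      using assoc_mult_mat_vec[OF mult_carrier_mat[OF A Ec] Sc x] assoc_mult_mat_vec[OF A Ec] Sc x
      by (simp del: assoc_mult_mat)
    finally show "(A - A * ?P') *\<^sub>v x = (A * E * S) *\<^sub>v x" .
  qed (use minus_carrier_mat[OF AP'] mult_carrier_mat[OF mult_carrier_mat[OF A Ec] Sc] in auto)
  then show ?thesis unfolding E_def S_def c_def .
qed

theorem lemma1:
  fixes n r k :: nat and A Q Qbar :: "real mat" and lam :: "nat \<Rightarrow> real"
    and \<nu> \<mu> x0 :: "real vec"
  assumes A_dim: "A \<in> carrier_mat n n"
    and A_sym: "transpose_mat A = A"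
    and rank: "vec_space.rank n A = r" and r_pos: "1 \<le> r"
    and Q_dim: "Q \<in> carrier_mat n r"
    and Q_orth: "transpose_mat Q * Q = 1\<^sub>m r"
    and lam_nz: "\<forall>i<r. lam i \<noteq> 0"
    and Q_eig: "\<forall>i<r. A *\<^sub>v col Q i = lam i \<cdot>\<^sub>v col Q i"
    and A_decomp: "A = Q * mat_diag r lam * transpose_mat Q"
    and Qbar_dim: "Qbar \<in> carrier_mat n (n - r)"
    and Qbar_orth: "transpose_mat Qbar * Qbar = 1\<^sub>m (n - r)"
    and Qbar_null: "{v \<in> carrier_vec n. A *\<^sub>v v = 0\<^sub>v n} = col_range Qbar"
    and nu_dim: "\<nu> \<in> carrier_vec r" and nu_nz: "\<nu> \<noteq> 0\<^sub>v r"
    and mu_dim: "\<mu> \<in> carrier_vec (n - r)"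
    and x0_def: "x0 = Q *\<^sub>v \<nu> + Qbar *\<^sub>v \<mu>"
    and k_pos: "1 \<le> k" and k_lt: "k < n"
    and S_nz: "vnorm (Smat n A x0 k *\<^sub>v (Q *\<^sub>v ((mat_diag r lam ^\<^sub>m k) *\<^sub>v \<nu>))) \<noteq> 0"
  shows "A - Ahat n A x0 k =
    A * (1\<^sub>m n - (1 / (vnorm (Smat n A x0 k *\<^sub>v (Q *\<^sub>v ((mat_diag r lam ^\<^sub>m k) *\<^sub>v \<nu>))))\<^sup>2) \<cdot>\<^sub>m
         (Smat n A x0 k * Q * (mat_diag r lam ^\<^sub>m k) * mat_of_cols r [\<nu>]
           * mat_of_rows r [\<nu>] * (mat_diag r lam ^\<^sub>m k) * transpose_mat Q))
      * Smat n A x0 k"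
proof -
  let ?D = "mat_diag r lam ^\<^sub>m k"
  let ?xs = "map (iter A x0) [0..<k]"
  define w where "w = iter A x0 k"
  have x0: "x0 \<in> carrier_vec n" using x0_def Q_dim nu_dim Qbar_dim mu_dim by simp
  have w: "w \<in> carrier_vec n" unfolding w_def by (rule iter_carrier[OF A_dim x0])
  have "A *\<^sub>v (Qbar *\<^sub>v \<mu>) = 0\<^sub>v n" using Qbar_null Qbar_dim mu_dim unfolding col_range_def by auto
  then have w_eq: "Q *\<^sub>v (?D *\<^sub>v \<nu>) = w"
    unfolding w_def x0_def using iter_orthonormal_decomp[OF A_decomp Q_dim mat_diag_dim Q_orth nu_dim _ _ k_pos]
      Qbar_dim mu_dim by simp
  obtain P where P: "is_orth_proj n (set ?xs) P"
    using is_orth_proj_exists[of ?xs n] iter_carrier[OF A_dim x0] by auto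
  define s where "s = w - P *\<^sub>v w"
  have S: "Smat n A x0 k = 1\<^sub>m n - P" by (rule Smat_eq_one_minus_proj[OF A_dim x0 k_pos P])
  have Sw: "Smat n A x0 k *\<^sub>v (Q *\<^sub>v (?D *\<^sub>v \<nu>)) = s"
    unfolding S w_eq s_def by (rule one_minus_mat_mult_vec[OF is_orth_proj_carrier[OF P] w])
  have "s \<noteq> 0\<^sub>v n" using S_nz unfolding Sw vnorm_def by auto
  moreover have "set (map (iter A x0) [0..<Suc k]) = insert w (set ?xs)" unfolding w_def by auto
  ultimately have P_k: "is_orth_proj n (set (map (iter A x0) [0..<Suc k]))
      (P + (1 / (s \<bullet> s)) \<cdot>\<^sub>m (mat_of_cols n [s] * mat_of_rows n [s]))"
    using is_orth_proj_insert[OF P _ w s_def] iter_carrier[OF A_dim x0] by auto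
  have "transpose_mat ?D = ?D"
    using transpose_pow_mat[OF mat_diag_dim[of r lam]] by (simp add: transpose_mat_diag)
  then have outer: "Smat n A x0 k * Q * ?D * mat_of_cols r [\<nu>] * mat_of_rows r [\<nu>] * ?D * transpose_mat Q
      = (1\<^sub>m n - P) * mat_of_cols n [w] * mat_of_rows n [w]"
    unfolding S w_eq[symmetric]
    by (rule outer_prod_mult_symmetric_factor[OF minus_carrier_mat[OF is_orth_proj_carrier[OF P]]
          Q_dim pow_carrier_mat[OF mat_diag_dim] _ nu_dim])
  show ?thesis
    unfolding Ahat_eq_mult_proj[OF A_dim x0 P_k] power2_vnorm Sw outer unfolding S
    using rank_one_update_residual[OF P A_dim w] unfolding s_def .
qed

end
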